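(* Let $H$ be a finite abelian group with exponent $e$, and let $S_1\subseteq H$ satisfy $0\notin S_1$ and $\ell S_1=S_1$ for all $\ell\in\mathbb{Z}_e^*$. Let $G=\mathbb{Z}_2\times H$ and $$S=(\{1\}\times S_1)\cup(\{0\}\times S_1)\cup\{(1,0)\}.$$ Let $p$ be a prime dividing $d=|S_1|$, let $f$ be the characteristic function of $S_1$, and suppose $f$ is $p^r$-plateaued over $H$ with $r\ge1$. Put $r_0=\min(r,v_p(d))$ (so $r_0\geq1$). Then for every $(x,y)\in G$, the Cayley graph $\mathrm{Cay}(G,S)$ has fractional revival between $(x+1,y)$ and $(x,y)$ at time $t=\pi/p^{r_0}$; specifically $e^{\imath t\lambda_g}=e^{\imath\pi/p^{r_0}}$ for $g\in\{0\}\times H$ and $e^{\imath t\lambda_g}=e^{-\imath\pi/p^{r_0}}$ for $g\in\{1\}\times H$, giving $(\cos(\pi/p^{r_0}),\ \imath\sin(\pi/p^{r_0}))$-fractional revival.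
   Context: $\mathbb{Z}_e^*=\{\ell:1\le\ell\le e-1,\gcd(\ell,e)=1\}$ and $\ell S_1=\{\ell s:s\in S_1\}$. $v_p(d)$ is the exponent of the highest power of $p$ dividing $d$. A class function over $H$ is $f:H\to\mathbb{Z}$ with $f(\ell x)=f(x)$ for all $x\in H$, $\ell\in\mathbb{Z}_e^*$. The Fourier transform is $\widehat{f}(\chi)=\sum_{x\in H}f(x)\overline{\chi(x)}$. A class function $f$ is $p^r$-plateaued over $H$ if there is an integer $k$ with $\widehat{f}(\chi)\equiv k\pmod{p^r}$ for every character $\chi$ of $H$, $r$ being the largest such exponent. $\mathrm{Cay}(G,S)$ has vertex set $G$, $u\sim v$ iff $u-v\in S$; $A$ its adjacency matrix, $H(t)=\exp(\imath tA)$; eigenvalues $\lambda_g=\sum_{s\in S}\chi_g(s)$. Fractional revival from $u$ to $v$ at time $t$ means $H(t)\mathbf{e}_u=\alpha\mathbf{e}_u+\beta\mathbf{e}_v$ for some $\alpha,\beta\in\mathbb{C}$ with $\beta\neq0$, $|\alpha|^2+|\beta|^2=1$. *)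

theory Defs
  imports Complex_Main "HOL-Library.Numeral_Type" "HOL-Library.Product_Plus"
    "HOL-Computational_Algebra.Primes"
begin

definition nsmul :: "nat \<Rightarrow> 'a::ab_group_add \<Rightarrow> 'a" where
  "nsmul n x = (((+) x) ^^ n) 0"

definition group_exponent :: "'a::{finite,ab_group_add} itself \<Rightarrow> nat" where
  "group_exponent _ = (LEAST n. n > 0 \<and> (\<forall>x::'a. nsmul n x = 0))"

definition units_mod :: "nat \<Rightarrow> nat set" where
  "units_mod e = {l. 1 \<le> l \<and> l \<le> e - 1 \<and> coprime l e}"

definition is_character :: "('a::ab_group_add \<Rightarrow> complex) \<Rightarrow> bool" where
  "is_character \<chi> \<longleftrightarrow> \<chi> 0 = 1 \<and> (\<forall>x y. \<chi> (x + y) = \<chi> x * \<chi> y)"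

definition class_function :: "('a::{finite,ab_group_add} \<Rightarrow> int) \<Rightarrow> bool" where
  "class_function f \<longleftrightarrow>
     (\<forall>x l. l \<in> units_mod (group_exponent TYPE('a)) \<longrightarrow> f (nsmul l x) = f x)"

definition fourier :: "('a::{finite,ab_group_add} \<Rightarrow> int) \<Rightarrow> ('a \<Rightarrow> complex) \<Rightarrow> complex" where
  "fourier f \<chi> = (\<Sum>x\<in>UNIV. of_int (f x) * cnj (\<chi> x))"

definition fourier_cong_const :: "('a::{finite,ab_group_add} \<Rightarrow> int) \<Rightarrow> nat \<Rightarrow> bool" where
  "fourier_cong_const f m \<longleftrightarrow>
     (\<exists>k::int. \<forall>\<chi>::'a \<Rightarrow> complex. is_character \<chi> \<longrightarrow>
        (\<exists>j::int. fourier f \<chi> = of_int k + of_nat m * of_int j))"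

definition plateaued :: "('a::{finite,ab_group_add} \<Rightarrow> int) \<Rightarrow> nat \<Rightarrow> nat \<Rightarrow> bool" where
  "plateaued f p r \<longleftrightarrow> class_function f \<and> fourier_cong_const f (p ^ r)
      \<and> \<not> fourier_cong_const f (p ^ Suc r)"

definition indicator_int :: "'a set \<Rightarrow> 'a \<Rightarrow> int" where
  "indicator_int A x = (if x \<in> A then 1 else 0)"

definition cay_adj :: "'a::ab_group_add set \<Rightarrow> 'a \<Rightarrow> 'a \<Rightarrow> complex" where
  "cay_adj S u v = (if u - v \<in> S then 1 else 0)"

fun mat_pow :: "('a::finite \<Rightarrow> 'a \<Rightarrow> complex) \<Rightarrow> nat \<Rightarrow> 'a \<Rightarrow> 'a \<Rightarrow> complex" where
  "mat_pow A 0 = (\<lambda>u v. if u = v then 1 else 0)"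
| "mat_pow A (Suc k) = (\<lambda>u v. \<Sum>w\<in>UNIV. A u w * mat_pow A k w v)"

definition transition :: "('a::finite \<Rightarrow> 'a \<Rightarrow> complex) \<Rightarrow> real \<Rightarrow> 'a \<Rightarrow> 'a \<Rightarrow> complex" where
  "transition A t u v = (\<Sum>k. (\<i> * of_real t) ^ k / of_nat (fact k) * mat_pow A k u v)"

definition frac_revival_with ::
  "('a::finite \<Rightarrow> 'a \<Rightarrow> complex) \<Rightarrow> 'a \<Rightarrow> 'a \<Rightarrow> real \<Rightarrow> complex \<Rightarrow> complex \<Rightarrow> bool" where
  "frac_revival_with A u v t \<alpha> \<beta> \<longleftrightarrow> \<beta> \<noteq> 0 \<and> (cmod \<alpha>)\<^sup>2 + (cmod \<beta>)\<^sup>2 = 1 \<and>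
     (\<forall>w. transition A t w u = \<alpha> * (if w = u then 1 else 0) + \<beta> * (if w = v then 1 else 0))"

definition frac_revival :: "('a::finite \<Rightarrow> 'a \<Rightarrow> complex) \<Rightarrow> 'a \<Rightarrow> 'a \<Rightarrow> real \<Rightarrow> bool" where
  "frac_revival A u v t \<longleftrightarrow> (\<exists>\<alpha> \<beta>. frac_revival_with A u v t \<alpha> \<beta>)"

definition cay_eigenvalue :: "'a set \<Rightarrow> ('a \<Rightarrow> complex) \<Rightarrow> complex" where
  "cay_eigenvalue S \<chi> = (\<Sum>s\<in>S. \<chi> s)"

end

theory Submission
  imports Defs "HOL-Library.FuncSet"
begin

text \<open>Characters of a finite abelian group G separate points (they extend step by step from
  subgroups), so the character sums are orthogonal and every Cayley graph on G is diagonalised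
  by them: H(t) u v = (1/|G|) \<Sum>\<chi> exp(i t \<lambda>\<chi>) \<chi>(v - u). For G = Z2 \<times> H and the given S one
  finds \<lambda>\<chi> = -1 if \<chi>(1,0) = -1 and \<lambda>\<chi> = 1 + 2\<sigma> with \<sigma> = \<Sum>s\<in>S1. \<chi>(0,s) otherwise.
  Evaluating the plateaued congruence at the trivial character shows \<sigma> \<equiv> |S1| (mod p^r), so
  p^r0 divides \<sigma>; at t = \<pi>/p^r0 this gives exp(i t \<lambda>\<chi>) = cos t + i sin t \<chi>(1,0), i.e.
  H(t) = cos t I + i sin t P with P the translation by (1,0).\<close>

lemma nsmul_0 [simp]: "nsmul 0 x = 0"
  by (simp add: nsmul_def)

lemma nsmul_Suc [simp]: "nsmul (Suc n) x = x + nsmul n x"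
  by (simp add: nsmul_def)

lemma nsmul_add: "nsmul (m + n) x = nsmul m x + nsmul n x"
  by (induction m) (auto simp: add.assoc)

lemma nsmul_mult: "nsmul (m * n) x = nsmul m (nsmul n x)"
  by (induction m) (auto simp: nsmul_add)

lemma nsmul_eq_0_exists:
  fixes x :: "'a::{finite,ab_group_add}"
  obtains m where "m > 0" "nsmul m x = 0"
proof -
  have "\<not> inj (\<lambda>n::nat. nsmul n x)"
    using finite_imageD[of "\<lambda>n::nat. nsmul n x" UNIV] by auto
  then obtain a b where "a < b" "nsmul a x = nsmul b x"
    unfolding inj_def by (metis linorder_neqE_nat)
  moreover have "nsmul b x = nsmul (b - a) x + nsmul a x"
    using \<open>a < b\<close> by (metis nsmul_add le_add_diff_inverse2 less_imp_le)
  ultimately show thesis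
    using that[of "b - a"] by simp
qed

subsection \<open>Extending characters from subgroups\<close>

text \<open>Closure under negation is omitted: in a finite group it follows (add_subgroup_uminus).\<close>
definition add_subgroup :: "'a::ab_group_add set \<Rightarrow> bool" where
  "add_subgroup K \<longleftrightarrow> 0 \<in> K \<and> (\<forall>x\<in>K. \<forall>y\<in>K. x + y \<in> K)"

definition character_on :: "'a::ab_group_add set \<Rightarrow> ('a \<Rightarrow> complex) \<Rightarrow> bool" where
  "character_on K \<chi> \<longleftrightarrow> \<chi> 0 = 1 \<and> (\<forall>x\<in>K. \<forall>y\<in>K. \<chi> (x + y) = \<chi> x * \<chi> y)"

definition adjoin :: "'a::ab_group_add set \<Rightarrow> 'a \<Rightarrow> 'a set" where
  "adjoin K g = {k + nsmul j g | k j. k \<in> K}"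

definition relative_order :: "'a::ab_group_add set \<Rightarrow> 'a \<Rightarrow> nat" where
  "relative_order K g = (LEAST m. 0 < m \<and> nsmul m g \<in> K)"

lemma add_subgroup_nsmul: "add_subgroup K \<Longrightarrow> x \<in> K \<Longrightarrow> nsmul n x \<in> K"
  by (induction n) (auto simp: add_subgroup_def)

lemma add_subgroup_uminus:
  fixes K :: "'a::{finite,ab_group_add} set"
  assumes "add_subgroup K" "x \<in> K"
  shows "- x \<in> K"
proof -
  obtain m where "m > 0" "nsmul m x = 0"
    by (rule nsmul_eq_0_exists)
  then obtain m' where "nsmul (Suc m') x = 0"
    by (cases m) auto
  then have "- x = nsmul m' x"
    by (simp add: minus_unique)
  with assms show ?thesis
    by (metis add_subgroup_nsmul)
qed

lemma add_subgroup_diff: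
  fixes K :: "'a::{finite,ab_group_add} set"
  assumes "add_subgroup K" "x \<in> K" "y \<in> K"
  shows "x - y \<in> K"
  using add_subgroup_uminus[OF assms(1,3)] assms
  unfolding add_subgroup_def diff_conv_add_uminus by blast

lemma character_on_nsmul:
  assumes "character_on K \<chi>" "add_subgroup K" "x \<in> K"
  shows "\<chi> (nsmul n x) = \<chi> x ^ n"
  using assms add_subgroup_nsmul[OF assms(2,3)]
  by (induction n) (auto simp: character_on_def)

lemma add_subgroup_adjoin:
  assumes "add_subgroup K"
  shows "add_subgroup (adjoin K g)"
  unfolding add_subgroup_def
proof (intro conjI ballI)
  have "0 = 0 + nsmul 0 g"
    by simp
  then show "0 \<in> adjoin K g"
    using assms unfolding adjoin_def add_subgroup_def by blast
next
  fix x y assume "x \<in> adjoin K g" "y \<in> adjoin K g"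
  then obtain k j k' j' where "k \<in> K" "k' \<in> K" "x = k + nsmul j g" "y = k' + nsmul j' g"
    unfolding adjoin_def by blast
  moreover from this have "x + y = (k + k') + nsmul (j + j') g" "k + k' \<in> K"
    using assms by (simp_all add: nsmul_add algebra_simps add_subgroup_def)
  ultimately show "x + y \<in> adjoin K g"
    unfolding adjoin_def by blast
qed

lemma subset_adjoin: "K \<subseteq> adjoin K g"
proof
  fix k assume "k \<in> K"
  moreover have "k = k + nsmul 0 g"
    by simp
  ultimately show "k \<in> adjoin K g"
    unfolding adjoin_def by blast
qed

lemma mem_adjoin_self:
  assumes "add_subgroup K"
  shows "g \<in> adjoin K g"
proof -
  have "g = 0 + nsmul 1 g"
    by simp
  then show ?thesis
    using assms unfolding adjoin_def add_subgroup_def by blast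
qed

lemma
  fixes K :: "'a::{finite,ab_group_add} set"
  assumes "add_subgroup K"
  shows relative_order_pos: "0 < relative_order K g"
    and nsmul_relative_order: "nsmul (relative_order K g) g \<in> K"
    and nsmul_less_relative_order: "0 < b \<Longrightarrow> b < relative_order K g \<Longrightarrow> nsmul b g \<notin> K"
proof -
  obtain M where "M > 0" "nsmul M g = 0"
    by (rule nsmul_eq_0_exists)
  then have "0 < M \<and> nsmul M g \<in> K"
    using assms by (simp add: add_subgroup_def)
  then have "0 < relative_order K g \<and> nsmul (relative_order K g) g \<in> K"
    unfolding relative_order_def by (rule LeastI)
  then show "0 < relative_order K g" "nsmul (relative_order K g) g \<in> K"
    by simp_all
  show "0 < b \<Longrightarrow> b < relative_order K g \<Longrightarrow> nsmul b g \<notin> K"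
    unfolding relative_order_def using not_less_Least by blast
qed

text \<open>Two representations k + j g of the same element differ by a multiple of
  relative_order K g in j, so prescribing an m-th root of \<chi> (nsmul m g) as the value at g
  is consistent.\<close>
lemma character_on_adjoin_consistent:
  fixes K :: "'a::{finite,ab_group_add} set"
  assumes K: "add_subgroup K" and \<chi>: "character_on K \<chi>"
    and w: "w ^ relative_order K g = \<chi> (nsmul (relative_order K g) g)"
    and k: "k \<in> K" "k' \<in> K" and eq: "k + nsmul j g = k' + nsmul j' g"
  shows "\<chi> k * w ^ j = \<chi> k' * w ^ j'"
proof -
  define m where "m = relative_order K g"
  have *: "\<chi> k * w ^ j = \<chi> k' * w ^ j'"
    if k: "k \<in> K" "k' \<in> K" and eq: "k + nsmul j g = k' + nsmul j' g" and "j' \<le> j"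
    for k k' j j'
  proof -
    define d where "d = j - j'"
    have j: "j = d + j'"
      using \<open>j' \<le> j\<close> d_def by simp
    have "k + nsmul d g + nsmul j' g = k' + nsmul j' g"
      using eq by (simp add: j nsmul_add add.assoc)
    then have k': "k' = k + nsmul d g"
      by simp
    have dK: "nsmul d g \<in> K"
      using add_subgroup_diff[OF K k(2) k(1)] by (simp add: k')
    have mK: "nsmul (d div m * m) g \<in> K"
      using add_subgroup_nsmul[OF K nsmul_relative_order[OF K]]
      by (simp add: nsmul_mult m_def)
    have "nsmul d g = nsmul (d mod m) g + nsmul (d div m * m) g"
      using nsmul_add[of "d mod m" "d div m * m" g] by simp
    then have "nsmul (d mod m) g \<in> K"
      using add_subgroup_diff[OF K dK mK] by (simp add: eq_diff_eq)
    moreover have "d mod m < m"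
      using relative_order_pos[OF K, of g] by (simp add: m_def)
    ultimately have "m dvd d"
      using nsmul_less_relative_order[OF K, of "d mod m" g] by (auto simp: m_def)
    then have "\<chi> (nsmul d g) = \<chi> (nsmul m g) ^ (d div m)"
      using character_on_nsmul[OF \<chi> K nsmul_relative_order[OF K]] nsmul_mult[of "d div m" m g]
      by (simp add: m_def)
    also have "\<dots> = w ^ (m * (d div m))"
      using w by (simp add: m_def power_mult)
    also have "\<dots> = w ^ d"
      using \<open>m dvd d\<close> by simp
    finally have "\<chi> k' = \<chi> k * w ^ d"
      using k' \<chi> k dK unfolding character_on_def by auto
    then show ?thesis
      unfolding j by (simp add: power_add)
  qed
  show ?thesis
  proof (cases "j' \<le> j")
    case True
    then show ?thesis using *[OF k eq] by simp
  next
    case False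
    then show ?thesis using *[OF k(2,1) eq[symmetric]] by simp
  qed
qed

lemma character_on_adjoin:
  fixes K :: "'a::{finite,ab_group_add} set"
  assumes K: "add_subgroup K" and \<chi>: "character_on K \<chi>"
    and w: "w ^ relative_order K g = \<chi> (nsmul (relative_order K g) g)"
  obtains \<chi>' where "character_on (adjoin K g) \<chi>'" "\<forall>x\<in>K. \<chi>' x = \<chi> x" "\<chi>' g = w"
proof -
  define \<chi>' where
    "\<chi>' x = (SOME v. \<exists>k j. k \<in> K \<and> x = k + nsmul j g \<and> v = \<chi> k * w ^ j)" for x
  have val: "\<chi>' (k + nsmul j g) = \<chi> k * w ^ j" if "k \<in> K" for k j
  proof -
    have "\<exists>k' j'. k' \<in> K \<and> k + nsmul j g = k' + nsmul j' g \<and> \<chi>' (k + nsmul j g) = \<chi> k' * w ^ j'"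
      unfolding \<chi>'_def by (rule someI_ex) (use that in blast)
    then show ?thesis
      using character_on_adjoin_consistent[OF K \<chi> w that] by metis
  qed
  have \<chi>K: "\<chi> 0 = 1" "0 \<in> K"
    using K \<chi> by (simp_all add: add_subgroup_def character_on_def)
  have "character_on (adjoin K g) \<chi>'"
    unfolding character_on_def
  proof (intro conjI ballI)
    show "\<chi>' 0 = 1"
      using val[of 0 0] \<chi>K by simp
  next
    fix x y assume "x \<in> adjoin K g" "y \<in> adjoin K g"
    then obtain k j k' j' where kj: "k \<in> K" "k' \<in> K" "x = k + nsmul j g" "y = k' + nsmul j' g"
      unfolding adjoin_def by blast
    have "k + k' \<in> K"
      using K kj by (simp add: add_subgroup_def)
    have "\<chi>' (x + y) = \<chi>' ((k + k') + nsmul (j + j') g)"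
      using kj by (simp add: nsmul_add algebra_simps)
    also have "\<dots> = \<chi> (k + k') * w ^ (j + j')"
      using val[OF \<open>k + k' \<in> K\<close>] .
    also have "\<dots> = \<chi>' x * \<chi>' y"
      unfolding kj(3,4) val[OF kj(1)] val[OF kj(2)]
      using \<chi> kj by (simp add: character_on_def power_add)
    finally show "\<chi>' (x + y) = \<chi>' x * \<chi>' y" .
  qed
  moreover have "\<forall>x\<in>K. \<chi>' x = \<chi> x" "\<chi>' g = w"
    using val[of _ 0] val[of 0 1] \<chi>K by simp_all
  ultimately show thesis
    using that by blast
qed

lemma complex_root_exists:
  assumes "m > 0"
  obtains w :: complex where "w ^ m = c"
proof -
  have "(rcis (root m (cmod c)) (Arg c / m)) ^ m = rcis (cmod c) (Arg c)"
    using assms by (simp add: DeMoivre2)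
  then show thesis
    using that rcis_cmod_Arg by metis
qed

lemma character_on_extend:
  fixes K :: "'a::{finite,ab_group_add} set"
  assumes "add_subgroup K" "character_on K \<chi>"
  obtains \<chi>' where "is_character \<chi>'" "\<forall>x\<in>K. \<chi>' x = \<chi> x"
  using assms
proof (induction "card (- K)" arbitrary: K \<chi> thesis rule: less_induct)
  case less
  show ?case
  proof (cases "K = UNIV")
    case True
    then show ?thesis
      using less.prems by (auto simp: is_character_def character_on_def)
  next
    case False
    then obtain g where g: "g \<notin> K"
      by blast
    obtain w where "w ^ relative_order K g = \<chi> (nsmul (relative_order K g) g)"
      using complex_root_exists relative_order_pos[OF less.prems(2)] by metis
    then obtain \<chi>' where \<chi>': "character_on (adjoin K g) \<chi>'" "\<forall>x\<in>K. \<chi>' x = \<chi> x"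
      using character_on_adjoin[OF less.prems(2,3)] by metis
    have "- adjoin K g \<subset> - K"
      using subset_adjoin mem_adjoin_self[OF less.prems(2)] g by blast
    then have "card (- adjoin K g) < card (- K)"
      by (simp add: psubset_card_mono)
    then show ?thesis
      using less.hyps[OF _ _ add_subgroup_adjoin[OF less.prems(2)] \<chi>'(1)] less.prems(1)
        \<chi>'(2) subset_adjoin by (metis subsetD)
  qed
qed

lemma cis_2pi_div_neq_1:
  assumes "2 \<le> m"
  shows "cis (2 * pi / real m) \<noteq> 1"
proof
  assume "cis (2 * pi / real m) = 1"
  then have "cos (2 * pi / m) = 1"
    by (metis cis.sel(1) one_complex.sel(1))
  then obtain n :: int where "2 * pi / m = real_of_int n * 2 * pi"
    using cos_one_2pi_int by blast
  then have "real_of_int n * real m = 1"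
    using assms by (simp add: field_simps)
  then have "int m dvd 1"
    by (metis dvd_triv_right of_int_eq_1_iff of_int_mult of_int_of_nat_eq)
  then show False
    using assms by simp
qed

lemma exists_character_neq_1:
  fixes h :: "'a::{finite,ab_group_add}"
  assumes "h \<noteq> 0"
  obtains \<chi> where "is_character \<chi>" "\<chi> h \<noteq> 1"
proof -
  have K: "add_subgroup {0::'a}"
    by (simp add: add_subgroup_def)
  define m where "m = relative_order {0} h"
  have "m \<noteq> 1"
    using nsmul_relative_order[OF K, of h] assms unfolding m_def by auto
  then have m: "m \<ge> 2"
    using relative_order_pos[OF K, of h] unfolding m_def by linarith
  define w where "w = cis (2 * pi / m)"
  have w1: "w \<noteq> 1"
    unfolding w_def using m by (rule cis_2pi_div_neq_1)
  have "w ^ m = 1"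
    unfolding w_def DeMoivre using m by simp
  then obtain \<chi>' where \<chi>': "character_on (adjoin {0} h) \<chi>'" "\<chi>' h = w"
    using character_on_adjoin[OF K, of "\<lambda>_. 1" w h] unfolding m_def
    by (auto simp: character_on_def)
  obtain \<chi> where "is_character \<chi>" "\<forall>x\<in>adjoin {0} h. \<chi> x = \<chi>' x"
    using character_on_extend[OF add_subgroup_adjoin[OF K] \<chi>'(1)] by metis
  then show thesis
    using that w1 mem_adjoin_self[OF K, of h] \<chi>'(2) by auto
qed

subsection \<open>Orthogonality of characters\<close>

abbreviation characters :: "('a::{finite,ab_group_add} \<Rightarrow> complex) set" where
  "characters \<equiv> {\<chi>. is_character \<chi>}"

lemma character_nsmul: "is_character \<chi> \<Longrightarrow> \<chi> (nsmul n x) = \<chi> x ^ n"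
  by (induction n) (auto simp: is_character_def)

lemma character_mult_uminus: "is_character \<chi> \<Longrightarrow> \<chi> x * \<chi> (- x) = 1"
  unfolding is_character_def by (metis add.right_inverse)

lemma character_nonzero: "is_character \<chi> \<Longrightarrow> \<chi> x \<noteq> 0"
  using character_mult_uminus[of \<chi> x] by auto

lemma finite_characters: "finite (characters :: ('a::{finite,ab_group_add} \<Rightarrow> complex) set)"
proof -
  define m where "m x = (SOME m. m > 0 \<and> nsmul m x = (0::'a))" for x
  have m: "m x > 0 \<and> nsmul (m x) x = 0" for x
    unfolding m_def by (rule someI_ex) (metis nsmul_eq_0_exists)
  have "characters \<subseteq> PiE UNIV (\<lambda>x. {z::complex. z ^ m x = 1})"
  proof
    fix \<chi> :: "'a \<Rightarrow> complex" assume "\<chi> \<in> characters"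
    then have "\<chi> x ^ m x = 1" for x
      using character_nsmul[of \<chi> "m x" x] m[of x] by (simp add: is_character_def)
    then show "\<chi> \<in> PiE UNIV (\<lambda>x. {z. z ^ m x = 1})"
      by (simp add: PiE_UNIV_domain)
  qed
  moreover have "finite (PiE UNIV (\<lambda>x. {z::complex. z ^ m x = 1}))"
    by (rule finite_PiE) (use m in \<open>auto intro!: finite_roots_unity simp: Suc_leI\<close>)
  ultimately show ?thesis
    by (rule finite_subset)
qed

lemma card_characters_pos: "card (characters :: ('a::{finite,ab_group_add} \<Rightarrow> complex) set) > 0"
proof -
  have "is_character (\<lambda>_::'a. 1)"
    by (simp add: is_character_def)
  then show ?thesis
    using finite_characters card_gt_0_iff by blast
qed

text \<open>For h \<noteq> 0, multiplication by a character \<chi>0 with \<chi>0 h \<noteq> 1 permutes the characters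
  and multiplies the sum by \<chi>0 h.\<close>
lemma sum_characters:
  fixes h :: "'a::{finite,ab_group_add}"
  shows "(\<Sum>\<chi>\<in>characters. \<chi> h) =
    (if h = 0 then of_nat (card (characters :: ('a \<Rightarrow> complex) set)) else 0)"
proof (cases "h = 0")
  case True
  have "(\<Sum>\<chi>\<in>characters. \<chi> h) = (\<Sum>\<chi>\<in>(characters :: ('a \<Rightarrow> complex) set). 1)"
    using True by (intro sum.cong) (auto simp: is_character_def)
  then show ?thesis
    using True by simp
next
  case False
  obtain \<chi>0 where \<chi>0: "is_character \<chi>0" "\<chi>0 h \<noteq> 1"
    using exists_character_neq_1[OF False] by blast
  define F where "F \<chi> = (\<lambda>x. \<chi>0 x * \<chi> x)" for \<chi> :: "'a \<Rightarrow> complex"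
  have "inj_on F characters"
  proof
    fix \<chi> \<psi> assume "F \<chi> = F \<psi>"
    then have "\<chi>0 x * \<chi> x = \<chi>0 x * \<psi> x" for x
      unfolding F_def by metis
    then show "\<chi> = \<psi>"
      using character_nonzero[OF \<chi>0(1)] by auto
  qed
  moreover have "F ` characters = characters"
  proof
    show "F ` characters \<subseteq> characters"
      using \<chi>0(1) by (auto simp: F_def is_character_def)
    show "characters \<subseteq> F ` characters"
    proof
      fix \<chi> :: "'a \<Rightarrow> complex" assume "\<chi> \<in> characters"
      then have \<chi>: "is_character \<chi>"
        by simp
      define \<psi> where "\<psi> x = \<chi> x * \<chi>0 (- x)" for x
      have "\<chi>0 (- (x + y)) = \<chi>0 (- x) * \<chi>0 (- y)" for x y
        using \<chi>0(1) unfolding is_character_def by (metis minus_add_distrib)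
      then have "is_character \<psi>"
        using \<chi> \<chi>0(1) unfolding \<psi>_def is_character_def by (simp add: algebra_simps)
      moreover have "F \<psi> = \<chi>"
        using character_mult_uminus[OF \<chi>0(1)] by (auto simp: F_def \<psi>_def fun_eq_iff algebra_simps)
      ultimately show "\<chi> \<in> F ` characters"
        by blast
    qed
  qed
  ultimately have "(\<Sum>\<chi>\<in>characters. \<chi> h) = (\<Sum>\<chi>\<in>characters. \<chi>0 h * \<chi> h)"
    using sum.reindex[of F characters "\<lambda>\<chi>. \<chi> h"] by (simp add: F_def)
  also have "\<dots> = \<chi>0 h * (\<Sum>\<chi>\<in>characters. \<chi> h)"
    by (simp add: sum_distrib_left)
  finally have "(1 - \<chi>0 h) * (\<Sum>\<chi>\<in>characters. \<chi> h) = 0"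
    by (simp add: algebra_simps)
  then show ?thesis
    using \<chi>0(2) False by simp
qed

subsection \<open>Spectral decomposition of Cayley graphs\<close>

lemma sum_cay_adj:
  fixes S :: "'a::{finite,ab_group_add} set"
  shows "(\<Sum>z\<in>UNIV. cay_adj S w z * F z) = (\<Sum>s\<in>S. F (w - s))"
proof -
  have "(\<Sum>z\<in>UNIV. cay_adj S w z * F z) = (\<Sum>z\<in>UNIV. if z \<in> {z. w - z \<in> S} then F z else 0)"
    by (intro sum.cong) (auto simp: cay_adj_def)
  also have "\<dots> = (\<Sum>z\<in>UNIV \<inter> {z. w - z \<in> S}. F z)"
    by (rule sum.inter_restrict[symmetric]) simp
  also have "\<dots> = (\<Sum>s\<in>S. F (w - s))"
    by (rule sum.reindex_bij_witness[of _ "\<lambda>s. w - s" "\<lambda>z. w - z"]) auto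
  finally show ?thesis .
qed

lemma sum_character_translate:
  assumes "is_character \<chi>"
  shows "(\<Sum>s\<in>S. \<chi> (v - (w - s))) = cay_eigenvalue S \<chi> * \<chi> (v - w)"
proof -
  have "\<chi> (v - (w - s)) = \<chi> (v - w) * \<chi> s" for s
  proof -
    have "v - (w - s) = (v - w) + s"
      by (simp add: algebra_simps)
    then show ?thesis
      using assms unfolding is_character_def by metis
  qed
  then show ?thesis
    by (simp add: cay_eigenvalue_def sum_distrib_right mult.commute)
qed

lemma mat_pow_cay_adj:
  fixes S :: "'a::{finite,ab_group_add} set"
  shows "mat_pow (cay_adj S) k w v =
    (\<Sum>\<chi>\<in>characters. cay_eigenvalue S \<chi> ^ k * \<chi> (v - w)) /
      of_nat (card (characters :: ('a \<Rightarrow> complex) set))"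
proof (induction k arbitrary: w v)
  case 0
  have "of_nat (card (characters :: ('a \<Rightarrow> complex) set)) \<noteq> (0::complex)"
    using card_characters_pos[where 'a='a] by simp
  then show ?case
    by (cases "w = v") (simp_all add: sum_characters)
next
  case (Suc k)
  define N :: complex where "N = of_nat (card (characters :: ('a \<Rightarrow> complex) set))"
  have "mat_pow (cay_adj S) (Suc k) w v =
      (\<Sum>s\<in>S. (\<Sum>\<chi>\<in>characters. cay_eigenvalue S \<chi> ^ k * \<chi> (v - (w - s))) / N)"
    by (simp only: mat_pow.simps Suc.IH N_def sum_cay_adj)
  also have "\<dots> = (\<Sum>\<chi>\<in>characters. cay_eigenvalue S \<chi> ^ k * (\<Sum>s\<in>S. \<chi> (v - (w - s)))) / N"
    by (simp only: sum_divide_distrib[symmetric] sum_distrib_left sum.swap[of _ S])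
  also have "\<dots> = (\<Sum>\<chi>\<in>characters. cay_eigenvalue S \<chi> ^ Suc k * \<chi> (v - w)) / N"
    by (simp add: sum_character_translate mult_ac)
  finally show ?case
    unfolding N_def .
qed

lemma transition_cay_adj:
  fixes S :: "'a::{finite,ab_group_add} set"
  shows "transition (cay_adj S) t w v =
    (\<Sum>\<chi>\<in>characters. exp (\<i> * of_real t * cay_eigenvalue S \<chi>) * \<chi> (v - w)) /
      of_nat (card (characters :: ('a \<Rightarrow> complex) set))"
proof -
  define N :: complex where "N = of_nat (card (characters :: ('a \<Rightarrow> complex) set))"
  have exp_sums: "(\<lambda>n. z ^ n / of_nat (fact n)) sums exp z" for z :: complex
    using exp_converges[of z] by (simp add: scaleR_conv_of_real divide_inverse mult.commute)
  have "(\<lambda>k. \<Sum>\<chi>\<in>characters. (\<i> * of_real t * cay_eigenvalue S \<chi>) ^ k / of_nat (fact k) * (\<chi> (v - w) / N))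
      sums (\<Sum>\<chi>\<in>characters. exp (\<i> * of_real t * cay_eigenvalue S \<chi>) * (\<chi> (v - w) / N))"
    by (intro sums_sum sums_mult2 exp_sums)
  moreover have "(\<Sum>\<chi>\<in>characters. (\<i> * of_real t * cay_eigenvalue S \<chi>) ^ k / of_nat (fact k) * (\<chi> (v - w) / N))
      = (\<i> * of_real t) ^ k / of_nat (fact k) * mat_pow (cay_adj S) k w v" for k
    by (simp add: mat_pow_cay_adj N_def[symmetric] sum_distrib_left sum_divide_distrib
        power_mult_distrib divide_divide_eq_left mult_ac)
  ultimately have "(\<lambda>k. (\<i> * of_real t) ^ k / of_nat (fact k) * mat_pow (cay_adj S) k w v)
      sums ((\<Sum>\<chi>\<in>characters. exp (\<i> * of_real t * cay_eigenvalue S \<chi>) * \<chi> (v - w)) / N)"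
    by (simp add: sum_divide_distrib)
  then show ?thesis
    unfolding transition_def N_def by (rule sums_unique[symmetric])
qed

lemma transition_cay_adj_affine:
  fixes S :: "'a::{finite,ab_group_add} set"
  assumes "\<And>\<chi>. is_character \<chi> \<Longrightarrow> exp (\<i> * of_real t * cay_eigenvalue S \<chi>) = \<alpha> + \<beta> * \<chi> a"
  shows "transition (cay_adj S) t w u =
    \<alpha> * (if w = u then 1 else 0) + \<beta> * (if w = a + u then 1 else 0)"
proof -
  define N :: complex where "N = of_nat (card (characters :: ('a \<Rightarrow> complex) set))"
  have "N \<noteq> 0"
    using card_characters_pos[where 'a='a] by (simp add: N_def)
  have "exp (\<i> * of_real t * cay_eigenvalue S \<chi>) * \<chi> (u - w) = \<alpha> * \<chi> (u - w) + \<beta> * \<chi> (a + (u - w))"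
    if "\<chi> \<in> characters" for \<chi> :: "'a \<Rightarrow> complex"
  proof -
    have "\<chi> (a + (u - w)) = \<chi> a * \<chi> (u - w)"
      using that by (simp add: is_character_def)
    then show ?thesis
      using that assms[of \<chi>] by (simp add: distrib_right)
  qed
  then have "transition (cay_adj S) t w u =
      (\<alpha> * (\<Sum>\<chi>\<in>characters. \<chi> (u - w)) + \<beta> * (\<Sum>\<chi>\<in>characters. \<chi> (a + (u - w)))) / N"
    by (simp add: transition_cay_adj N_def[symmetric] sum.distrib sum_distrib_left)
  also have "\<dots> = \<alpha> * (if w = u then 1 else 0) + \<beta> * (if w = a + u then 1 else 0)"
  proof -
    have "u - w = 0 \<longleftrightarrow> w = u" "a + (u - w) = 0 \<longleftrightarrow> w = a + u"
      by (auto simp: algebra_simps)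
    then show ?thesis
      using \<open>N \<noteq> 0\<close> by (simp add: sum_characters N_def[symmetric] add_divide_distrib)
  qed
  finally show ?thesis .
qed

subsection \<open>The double cover of a Cayley graph on H\<close>

lemma character_of_order_two:
  assumes "is_character \<chi>" "a + a = 0"
  shows "\<chi> a = 1 \<or> \<chi> a = -1"
proof -
  have "\<chi> a * \<chi> a = \<chi> (a + a)"
    using assms(1) by (simp add: is_character_def)
  also have "\<dots> = 1"
    using assms by (simp add: is_character_def)
  finally show ?thesis
    by (simp add: square_eq_1_iff)
qed

lemma character_one_zero_sign:
  fixes \<chi> :: "2 \<times> 'a::ab_group_add \<Rightarrow> complex"
  assumes "is_character \<chi>"
  shows "\<chi> (1, 0) = 1 \<or> \<chi> (1, 0) = -1"
proof -
  have "(1::2, 0::'a) + (1, 0) = 0"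
    by (simp add: zero_prod_def)
  then show ?thesis
    using character_of_order_two[OF assms] by blast
qed

lemma is_character_restrict_snd:
  fixes \<chi> :: "'b::ab_group_add \<times> 'a::ab_group_add \<Rightarrow> complex"
  assumes "is_character \<chi>"
  shows "is_character (\<lambda>h. \<chi> (0, h))"
  unfolding is_character_def
proof (intro conjI allI)
  show "\<chi> (0, 0) = 1"
    using assms unfolding is_character_def zero_prod_def by simp
  fix x y :: 'a
  have "\<chi> ((0, x) + (0, y)) = \<chi> (0, x) * \<chi> (0, y)"
    using assms unfolding is_character_def by blast
  then show "\<chi> (0, x + y) = \<chi> (0, x) * \<chi> (0, y)"
    by simp
qed

lemma cay_eigenvalue_double_cover:
  fixes S1 :: "'a::{finite,ab_group_add} set" and \<chi> :: "2 \<times> 'a \<Rightarrow> complex"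
  assumes "0 \<notin> S1" "is_character \<chi>"
  shows "cay_eigenvalue (({1} \<times> S1) \<union> ({0} \<times> S1) \<union> {(1, 0)}) \<chi>
     = \<chi> (1, 0) + (\<chi> (1, 0) + 1) * (\<Sum>s\<in>S1. \<chi> (0, s))"
proof -
  have slice: "sum \<chi> ({c} \<times> S1) = (\<Sum>s\<in>S1. \<chi> (c, s))" for c :: 2
    using sum.cartesian_product[of "\<lambda>a b. \<chi> (a, b)" S1 "{c}"] by simp
  have shift: "\<chi> (1, s) = \<chi> (1, 0) * \<chi> (0, s)" for s
  proof -
    have "(1::2, s) = (1, 0) + (0, s)"
      by simp
    then show ?thesis
      using assms(2) unfolding is_character_def by metis
  qed
  have "cay_eigenvalue (({1} \<times> S1) \<union> ({0} \<times> S1) \<union> {(1, 0)}) \<chi>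
      = sum \<chi> (({1} \<times> S1) \<union> ({0} \<times> S1)) + sum \<chi> {(1, 0)}"
    unfolding cay_eigenvalue_def by (rule sum.union_disjoint) (use assms(1) in auto)
  also have "\<dots> = sum \<chi> ({1} \<times> S1) + sum \<chi> ({0} \<times> S1) + \<chi> (1, 0)"
    by (subst sum.union_disjoint) auto
  also have "\<dots> = (\<Sum>s\<in>S1. \<chi> (1, 0) * \<chi> (0, s)) + (\<Sum>s\<in>S1. \<chi> (0, s)) + \<chi> (1, 0)"
    by (simp only: slice sum.cong[OF refl shift])
  also have "\<dots> = \<chi> (1, 0) + (\<chi> (1, 0) + 1) * (\<Sum>s\<in>S1. \<chi> (0, s))"
    by (simp only: sum_distrib_left[symmetric] distrib_right mult_1_left add.commute add.left_commute)
  finally show ?thesis .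
qed

lemma exp_cay_eigenvalue_double_cover:
  fixes S1 :: "'a::{finite,ab_group_add} set" and \<chi> :: "2 \<times> 'a \<Rightarrow> complex"
  assumes "0 \<notin> S1" "is_character \<chi>" "t * real q = pi"
    and "(\<Sum>s\<in>S1. \<chi> (0, s)) = of_int (int q * n)"
  shows "exp (\<i> * of_real t * cay_eigenvalue (({1} \<times> S1) \<union> ({0} \<times> S1) \<union> {(1, 0)}) \<chi>) =
    (if \<chi> (1, 0) = 1 then exp (\<i> * of_real t) else exp (- \<i> * of_real t))"
proof (cases "\<chi> (1, 0) = 1")
  case True
  have "t * (1 + 2 * (real q * real_of_int n)) = t + 2 * pi * real_of_int n"
    using assms(3) by (simp add: algebra_simps)
  from arg_cong[OF this, of "\<lambda>x. \<i> * complex_of_real x"]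
  have arg: "\<i> * of_real t * (1 + 2 * of_int (int q * n)) = \<i> * of_real t + 2 * pi * n * \<i>"
    by (simp add: algebra_simps)
  have "cay_eigenvalue (({1} \<times> S1) \<union> ({0} \<times> S1) \<union> {(1, 0)}) \<chi> = 1 + 2 * of_int (int q * n)"
    unfolding cay_eigenvalue_double_cover[OF assms(1,2)] True assms(4) by simp
  then have "exp (\<i> * of_real t * cay_eigenvalue (({1} \<times> S1) \<union> ({0} \<times> S1) \<union> {(1, 0)}) \<chi>)
      = exp (\<i> * of_real t) * exp (2 * pi * n * \<i>)"
    by (simp only: arg exp_add)
  moreover have "exp (2 * pi * n * \<i>) = 1"
    using cis_multiple_2pi[of "real_of_int n"] by (simp add: cis_conv_exp mult_ac)
  ultimately show ?thesis
    using True by simp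
next
  case False
  then have "\<chi> (1, 0) = -1"
    using character_one_zero_sign[OF assms(2)] by blast
  then show ?thesis
    unfolding cay_eigenvalue_double_cover[OF assms(1,2)] by simp
qed

subsection \<open>Plateaued indicator functions\<close>

lemma fourier_indicator_int: "fourier (indicator_int A) \<psi> = (\<Sum>x\<in>A. cnj (\<psi> x))"
proof -
  have "fourier (indicator_int A) \<psi> = (\<Sum>x\<in>UNIV. if x \<in> A then cnj (\<psi> x) else 0)"
    unfolding fourier_def indicator_int_def by (intro sum.cong) auto
  also have "\<dots> = (\<Sum>x\<in>UNIV \<inter> A. cnj (\<psi> x))"
    by (rule sum.inter_restrict[symmetric]) simp
  finally show ?thesis
    by simp
qed

lemma nonempty_if_not_fourier_cong_const:
  assumes "\<not> fourier_cong_const (indicator_int A) m"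
  shows "A \<noteq> {}"
proof
  assume "A = {}"
  then have "fourier (indicator_int A) \<chi> = 0" for \<chi>
    by (simp add: fourier_indicator_int)
  then have "fourier_cong_const (indicator_int A) m"
    unfolding fourier_cong_const_def by (intro exI[of _ 0]) (auto intro!: exI[of _ 0])
  with assms show False
    by contradiction
qed

lemma character_sum_dvd_if_fourier_cong_const:
  fixes A :: "'a::{finite,ab_group_add} set"
  assumes "fourier_cong_const (indicator_int A) m" "q dvd m" "q dvd card A" "is_character \<psi>"
  obtains n :: int where "(\<Sum>s\<in>A. \<psi> s) = of_int (int q * n)"
proof -
  obtain k :: int where k: "\<And>\<chi>::'a \<Rightarrow> complex. is_character \<chi> \<Longrightarrow>
      \<exists>j::int. fourier (indicator_int A) \<chi> = of_int k + of_nat m * of_int j"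
    using assms(1) unfolding fourier_cong_const_def by blast
  have "is_character (\<lambda>_::'a. 1)"
    by (simp add: is_character_def)
  then obtain j0 :: int where j0: "fourier (indicator_int A) (\<lambda>_. 1) = of_int k + of_nat m * of_int j0"
    using k by blast
  obtain j :: int where j: "fourier (indicator_int A) \<psi> = of_int k + of_nat m * of_int j"
    using k[OF assms(4)] by blast
  have "(\<Sum>s\<in>A. \<psi> s) = cnj (fourier (indicator_int A) \<psi>)"
    by (simp add: fourier_indicator_int cnj_sum)
  also have "\<dots> = of_int k + of_nat m * of_int j"
    unfolding j by simp
  also have "\<dots> = of_nat (card A) + of_nat m * (of_int j - of_int j0)"
    using j0 by (simp add: fourier_indicator_int algebra_simps)
  also have "\<dots> = of_int (int (card A) + int m * (j - j0))"
    by simp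
  finally have "(\<Sum>s\<in>A. \<psi> s) = of_int (int (card A) + int m * (j - j0))" .
  moreover have "int q dvd int (card A) + int m * (j - j0)"
    using assms(2,3) by (simp only: int_dvd_int_iff dvd_add dvd_mult2)
  ultimately show thesis
    using that by (metis dvdE)
qed

lemma plateaued_character_sum_dvd:
  fixes A :: "'a::{finite,ab_group_add} set"
  assumes "plateaued (indicator_int A) p r" "is_character \<psi>"
  obtains n :: int where "(\<Sum>s\<in>A. \<psi> s) = of_int (int (p ^ min r (multiplicity p (card A))) * n)"
proof -
  have "fourier_cong_const (indicator_int A) (p ^ r)"
    using assms(1) by (simp add: plateaued_def)
  moreover have "p ^ min r (multiplicity p (card A)) dvd p ^ r"
    by (simp add: le_imp_power_dvd)
  moreover have "p ^ min r (multiplicity p (card A)) dvd card A"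
    by (meson dvd_trans le_imp_power_dvd min.cobounded2 multiplicity_dvd)
  ultimately show thesis
    using character_sum_dvd_if_fourier_cong_const[OF _ _ _ assms(2)] that by blast
qed

lemma plateaued_prime_power_ge_2:
  fixes A :: "'a::{finite,ab_group_add} set" and p r :: nat
  assumes "plateaued (indicator_int A) p r" "prime p" "p dvd card A" "r \<ge> 1"
  shows "2 \<le> p ^ min r (multiplicity p (card A))"
proof -
  have "A \<noteq> {}"
    using assms(1) nonempty_if_not_fourier_cong_const by (auto simp: plateaued_def)
  then have "1 \<le> min r (multiplicity p (card A))"
    using assms(2-4) by (simp add: card_gt_0_iff prime_multiplicity_gt_zero_iff Suc_le_eq)
  then have "p ^ 1 \<le> p ^ min r (multiplicity p (card A))"
    using prime_gt_0_nat[OF assms(2)] by (intro power_increasing) auto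
  then show ?thesis
    using prime_ge_2_nat[OF assms(2)] by simp
qed

lemma exp_sign_eq_cos_sin:
  assumes "c = 1 \<or> c = -1"
  shows "(if c = 1 then exp (\<i> * of_real t) else exp (- \<i> * of_real t)) =
    of_real (cos t) + \<i> * of_real (sin t) * c"
  using assms cis_conv_exp[of t] cis_conv_exp[of "- t"] by (auto simp: complex_eq_iff)

lemma frac_revival_with_cos_sin:
  assumes "\<And>w. transition A t w u =
      of_real (cos t) * (if w = u then 1 else 0) + \<i> * of_real (sin t) * (if w = v then 1 else 0)"
    and "0 < t" "t < pi"
  shows "frac_revival_with A u v t (of_real (cos t)) (\<i> * of_real (sin t))"
proof -
  have "sin t \<noteq> 0"
    using sin_gt_zero[OF assms(2,3)] by simp
  then show ?thesis
    unfolding frac_revival_with_def using assms(1) by (simp add: norm_mult)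
qed

theorem theorem3p6:
  fixes S1 :: "'h::{finite,ab_group_add} set" and p r :: nat
  assumes "0 \<notin> S1"
    and "\<forall>l \<in> units_mod (group_exponent TYPE('h)). (nsmul l) ` S1 = S1"
    and "prime p" and "p dvd card S1"
    and "plateaued (indicator_int S1) p r" and "r \<ge> 1"
  defines "S \<equiv> ({1::2} \<times> S1) \<union> ({0::2} \<times> S1) \<union> {(1::2, 0::'h)}"
    and "r0 \<equiv> min r (multiplicity p (card S1))"
  shows "(\<forall>x::2. \<forall>y::'h.
           frac_revival (cay_adj S) (x + 1, y) (x, y) (pi / real (p ^ r0)) \<and>
           frac_revival_with (cay_adj S) (x + 1, y) (x, y) (pi / real (p ^ r0))
             (complex_of_real (cos (pi / real (p ^ r0))))
             (\<i> * complex_of_real (sin (pi / real (p ^ r0)))))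
       \<and> (\<forall>\<chi> :: 2 \<times> 'h \<Rightarrow> complex. is_character \<chi> \<longrightarrow>
           exp (\<i> * of_real (pi / real (p ^ r0)) * cay_eigenvalue S \<chi>) =
             (if \<chi> (1, 0) = 1 then exp (\<i> * of_real (pi / real (p ^ r0)))
              else exp (- \<i> * of_real (pi / real (p ^ r0)))))"
proof -
  define q where "q = p ^ r0"
  define t where "t = pi / real q"
  have "2 \<le> q"
    unfolding q_def r0_def using assms(5,3,4,6) by (rule plateaued_prime_power_ge_2)
  then have t: "t * real q = pi" "0 < t" "t < pi"
    unfolding t_def by (simp_all add: field_simps)
  have eig: "exp (\<i> * of_real t * cay_eigenvalue S \<chi>) =
      (if \<chi> (1, 0) = 1 then exp (\<i> * of_real t) else exp (- \<i> * of_real t))"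
    if \<chi>: "is_character \<chi>" for \<chi>
  proof -
    obtain n where "(\<Sum>s\<in>S1. \<chi> (0, s)) = of_int (int q * n)"
      using plateaued_character_sum_dvd[OF assms(5) is_character_restrict_snd[OF \<chi>]]
      unfolding q_def r0_def .
    then show ?thesis
      unfolding S_def by (rule exp_cay_eigenvalue_double_cover[OF assms(1) \<chi> t(1)])
  qed
  have "transition (cay_adj S) t w u = of_real (cos t) * (if w = u then 1 else 0)
      + \<i> * of_real (sin t) * (if w = (1, 0) + u then 1 else 0)" for w u
    by (rule transition_cay_adj_affine)
      (simp add: eig exp_sign_eq_cos_sin character_one_zero_sign)
  then have "frac_revival_with (cay_adj S) (x + 1, y) (x, y) t (of_real (cos t)) (\<i> * of_real (sin t))"
    for x y
    by (intro frac_revival_with_cos_sin t(2,3)) (simp add: algebra_simps)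
  then show ?thesis
    using eig unfolding t_def q_def frac_revival_def by blast
qed

end
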